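(* Let $T$ be a complete theory with monster model $\mathcal{U}$, $A\subseteq B$ small subsets of $\mathcal{U}$, $\mu\in\mathfrak{M}_x(\mathcal{U})$, $\nu\in\mathfrak{M}_y(\mathcal{U})$. If $\mu\geq_{\mathbb{E},A}\nu$, then $\mu\geq_{\mathbb{E},B}\nu$.
   Context: For $C\subseteq\mathcal{U}$, $\mathcal{L}_x(C)$ is the Boolean algebra of formulas in $x$ with parameters from $C$ modulo $T$, embedded in $\mathcal{L}_{xy}(C)$ via $\varphi(x)\mapsto\varphi(x)\wedge y=y$; $\mathfrak{M}_x(C)$ is the set of finitely additive probability measures on $\mathcal{L}_x(C)$. For $\omega\in\mathfrak{M}_{xy}(C)$, $\pi_x(\omega)(\varphi(x))=\omega(\varphi(x)\wedge y=y)$ (similarly $\pi_y$); $\omega|_D$ is restriction. $\mu\geq_{\mathbb{E},A}\nu$ means there is $\lambda\in\mathfrak{M}_{xy}(A)$ with $\pi_x(\lambda)=\mu|_A$ such that every $\omega\in\mathfrak{M}_{xy}(\mathcal{U})$ with $\omega|_A=\lambda$ and $\pi_x(\omega)=\mu$ satisfies $\pi_y(\omega)=\nu$. *)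

theory Defs
  imports Complex_Main
begin

text \<open>Function and relation symbols are applied to argument lists of any length,
i.e. a symbol together with a length plays the role of a symbol of that arity.\<close>

datatype 'f trm = Var nat | Fn 'f "'f trm list"

datatype ('f, 'r) fm =
    FF
  | Eq "'f trm" "'f trm"
  | Rel 'r "'f trm list"
  | Neg "('f, 'r) fm"
  | Conj "('f, 'r) fm" "('f, 'r) fm"
  | Ex nat "('f, 'r) fm"

datatype ('f, 'r, 'u) struct =
  Struct (fint: "'f \<Rightarrow> 'u list \<Rightarrow> 'u") (rint: "'r \<Rightarrow> 'u list \<Rightarrow> bool")

fun teval :: "('f, 'r, 'u) struct \<Rightarrow> (nat \<Rightarrow> 'u) \<Rightarrow> 'f trm \<Rightarrow> 'u" where
  "teval M e (Var i) = e i"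
| "teval M e (Fn f ts) = fint M f (map (teval M e) ts)"

fun sat :: "('f, 'r, 'u) struct \<Rightarrow> (nat \<Rightarrow> 'u) \<Rightarrow> ('f, 'r) fm \<Rightarrow> bool" where
  "sat M e FF = False"
| "sat M e (Eq s t) = (teval M e s = teval M e t)"
| "sat M e (Rel r ts) = rint M r (map (teval M e) ts)"
| "sat M e (Neg \<phi>) = (\<not> sat M e \<phi>)"
| "sat M e (Conj \<phi> \<psi>) = (sat M e \<phi> \<and> sat M e \<psi>)"
| "sat M e (Ex v \<phi>) = (\<exists>a. sat M (e(v := a)) \<phi>)"

fun tvars :: "'f trm \<Rightarrow> nat set" where
  "tvars (Var i) = {i}"
| "tvars (Fn f ts) = (\<Union>t\<in>set ts. tvars t)"

fun fvars :: "('f, 'r) fm \<Rightarrow> nat set" where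
  "fvars FF = {}"
| "fvars (Eq s t) = tvars s \<union> tvars t"
| "fvars (Rel r ts) = (\<Union>t\<in>set ts. tvars t)"
| "fvars (Neg \<phi>) = fvars \<phi>"
| "fvars (Conj \<phi> \<psi>) = fvars \<phi> \<union> fvars \<psi>"
| "fvars (Ex v \<phi>) = fvars \<phi> - {v}"

text \<open>A formula with
parameters is a pair of a formula and an environment that sends every free variable
other than 0 into C.\<close>

definition saturated :: "('f, 'r, 'u) struct \<Rightarrow> 'k set \<Rightarrow> bool" where
  "saturated M K \<longleftrightarrow>
     (\<forall>(C :: 'u set) (p :: (('f, 'r) fm \<times> (nat \<Rightarrow> 'u)) set).
        (card_of C, card_of K) \<in> ordLess \<longrightarrow>
        (\<forall>(\<phi>, e)\<in>p. \<forall>i\<in>fvars \<phi>. i \<noteq> 0 \<longrightarrow> e i \<in> C) \<longrightarrow>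
        (\<forall>F. finite F \<longrightarrow> F \<subseteq> p \<longrightarrow> (\<exists>a. \<forall>(\<phi>, e)\<in>F. sat M (e(0 := a)) \<phi>)) \<longrightarrow>
        (\<exists>a. \<forall>(\<phi>, e)\<in>p. sat M (e(0 := a)) \<phi>))"

definition automorphism :: "('f, 'r, 'u) struct \<Rightarrow> ('u \<Rightarrow> 'u) \<Rightarrow> bool" where
  "automorphism M \<sigma> \<longleftrightarrow> bij \<sigma> \<and>
     (\<forall>f as. \<sigma> (fint M f as) = fint M f (map \<sigma> as)) \<and>
     (\<forall>r as. rint M r (map \<sigma> as) = rint M r as)"

definition elementary_on :: "('f, 'r, 'u) struct \<Rightarrow> 'u set \<Rightarrow> ('u \<Rightarrow> 'u) \<Rightarrow> bool" where
  "elementary_on M D h \<longleftrightarrow>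
     (\<forall>(\<phi> :: ('f, 'r) fm) e. (\<forall>i\<in>fvars \<phi>. e i \<in> D) \<longrightarrow> (sat M e \<phi> \<longleftrightarrow> sat M (h \<circ> e) \<phi>))"

definition strongly_homogeneous :: "('f, 'r, 'u) struct \<Rightarrow> 'k set \<Rightarrow> bool" where
  "strongly_homogeneous M K \<longleftrightarrow>
     (\<forall>D h. (card_of D, card_of K) \<in> ordLess \<longrightarrow> elementary_on M D h \<longrightarrow>
        (\<exists>\<sigma>. automorphism M \<sigma> \<and> (\<forall>d\<in>D. \<sigma> d = h d)))"

text \<open>M is a monster model (of its complete theory T = Th(M)) with respect to the
cardinal |K|: |K| is uncountable and exceeds the size of the language, and M is
|K|-saturated and strongly |K|-homogeneous.\<close>

definition monster :: "('f, 'r, 'u) struct \<Rightarrow> 'k set \<Rightarrow> bool" where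
  "monster M K \<longleftrightarrow>
     (card_of (UNIV :: ('f + 'r + nat) set), card_of K) \<in> ordLess \<and>
     saturated M K \<and> strongly_homogeneous M K"

definition small :: "'k set \<Rightarrow> 'u set \<Rightarrow> bool" where
  "small K C \<longleftrightarrow> (card_of C, card_of K) \<in> ordLess"

text \<open>A tuple of variables x of length n is rendered as the variables 0..n-1;
L_x(C) (formulas in x with parameters from C, modulo T) is rendered as the Boolean
algebra of C-definable subsets of U^n (n-tuples as lists of length n).\<close>

definition tuples :: "nat \<Rightarrow> 'u list set" where
  "tuples n = {a. length a = n}"

definition env :: "nat \<Rightarrow> 'u list \<Rightarrow> (nat \<Rightarrow> 'u) \<Rightarrow> nat \<Rightarrow> 'u" where
  "env n a e i = (if i < n then a ! i else e i)"

definition defin :: "('f, 'r, 'u) struct \<Rightarrow> nat \<Rightarrow> 'u set \<Rightarrow> 'u list set set" where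
  "defin M n C = {S. \<exists>(\<phi> :: ('f, 'r) fm) e.
      (\<forall>i\<in>fvars \<phi>. n \<le> i \<longrightarrow> e i \<in> C) \<and> S = {a \<in> tuples n. sat M (env n a e) \<phi>}}"

definition fa_prob :: "'a set set \<Rightarrow> 'a set \<Rightarrow> ('a set \<Rightarrow> real) \<Rightarrow> bool" where
  "fa_prob Alg X \<mu> \<longleftrightarrow> \<mu> X = 1 \<and> (\<forall>S\<in>Alg. 0 \<le> \<mu> S) \<and>
     (\<forall>S\<in>Alg. \<forall>T\<in>Alg. S \<inter> T = {} \<longrightarrow> \<mu> (S \<union> T) = \<mu> S + \<mu> T)"

definition keisler :: "('f, 'r, 'u) struct \<Rightarrow> nat \<Rightarrow> 'u set \<Rightarrow> ('u list set \<Rightarrow> real) \<Rightarrow> bool" where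
  "keisler M n C \<mu> \<longleftrightarrow> fa_prob (defin M n C) (tuples n) \<mu>"

definition agree :: "'a set set \<Rightarrow> ('a set \<Rightarrow> real) \<Rightarrow> ('a set \<Rightarrow> real) \<Rightarrow> bool" where
  "agree Alg \<mu> \<nu> \<longleftrightarrow> (\<forall>S\<in>Alg. \<mu> S = \<nu> S)"

text \<open>Marginals: in the xy-sort, x = variables 0..n-1, y = variables n..n+m-1.
phi(x) corresponds to phi(x) /\ y=y, psi(y) to x=x /\ psi(y).\<close>
definition pi_x :: "nat \<Rightarrow> nat \<Rightarrow> ('u list set \<Rightarrow> real) \<Rightarrow> 'u list set \<Rightarrow> real" where
  "pi_x n m \<omega> S = \<omega> {a \<in> tuples (n + m). take n a \<in> S}"

definition pi_y :: "nat \<Rightarrow> nat \<Rightarrow> ('u list set \<Rightarrow> real) \<Rightarrow> 'u list set \<Rightarrow> real" where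
  "pi_y n m \<omega> S = \<omega> {a \<in> tuples (n + m). drop n a \<in> S}"

definition geE :: "('f, 'r, 'u) struct \<Rightarrow> nat \<Rightarrow> nat \<Rightarrow> 'u set \<Rightarrow>
    ('u list set \<Rightarrow> real) \<Rightarrow> ('u list set \<Rightarrow> real) \<Rightarrow> bool" where
  "geE M n m A \<mu> \<nu> \<longleftrightarrow>
     (\<exists>lam. keisler M (n + m) A lam \<and> agree (defin M n A) (pi_x n m lam) \<mu> \<and>
        (\<forall>\<omega>. keisler M (n + m) UNIV \<omega> \<longrightarrow> agree (defin M (n + m) A) \<omega> lam \<longrightarrow>
             agree (defin M n UNIV) (pi_x n m \<omega>) \<mu> \<longrightarrow>
             agree (defin M m UNIV) (pi_y n m \<omega>) \<nu>))"

end

theory Submission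
  imports Defs "HOL-Analysis.Sigma_Algebra" "HOL-Analysis.Path_Connected"
    "HOL-Analysis.Function_Topology" "HOL-Analysis.Abstract_Topological_Spaces"
begin

section \<open>Weighted Hall theorem\<close>

definition neighbours :: "('i \<Rightarrow> 'j \<Rightarrow> bool) \<Rightarrow> 'j set \<Rightarrow> 'i set \<Rightarrow> 'j set" where
  "neighbours E J S = {j \<in> J. \<exists>i\<in>S. E i j}"

definition hall_condition ::
    "('i \<Rightarrow> 'j \<Rightarrow> bool) \<Rightarrow> 'i set \<Rightarrow> 'j set \<Rightarrow> ('i \<Rightarrow> real) \<Rightarrow> ('j \<Rightarrow> real) \<Rightarrow> bool" where
  "hall_condition E I J a b \<longleftrightarrow> finite I \<and> finite J \<and> (\<forall>i\<in>I. 0 \<le> a i) \<and> (\<forall>j\<in>J. 0 \<le> b j) \<and>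
     sum a I = sum b J \<and> (\<forall>S\<subseteq>I. sum a S \<le> sum b (neighbours E J S))"

definition transport_plan ::
    "('i \<Rightarrow> 'j \<Rightarrow> bool) \<Rightarrow> 'i set \<Rightarrow> 'j set \<Rightarrow> ('i \<Rightarrow> real) \<Rightarrow> ('j \<Rightarrow> real) \<Rightarrow>
     ('i \<Rightarrow> 'j \<Rightarrow> real) \<Rightarrow> bool" where
  "transport_plan E I J a b w \<longleftrightarrow> (\<forall>i j. 0 \<le> w i j) \<and>
     (\<forall>i j. w i j \<noteq> 0 \<longrightarrow> E i j \<and> i \<in> I \<and> j \<in> J) \<and>
     (\<forall>i\<in>I. sum (w i) J = a i) \<and> (\<forall>j\<in>J. (\<Sum>i\<in>I. w i j) = b j)"

lemma neighbours_subset: "neighbours E J S \<subseteq> J"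
  unfolding neighbours_def by auto

lemma neighbours_mono: "S \<subseteq> T \<Longrightarrow> neighbours E J S \<subseteq> neighbours E J T"
  unfolding neighbours_def by auto

lemma hall_conditionD:
  assumes "hall_condition E I J a b"
  shows "finite I" "finite J" "\<And>i. i \<in> I \<Longrightarrow> 0 \<le> a i" "\<And>j. j \<in> J \<Longrightarrow> 0 \<le> b j"
    "sum a I = sum b J" "\<And>S. S \<subseteq> I \<Longrightarrow> sum a S \<le> sum b (neighbours E J S)"
  using assms unfolding hall_condition_def by auto

lemma hall_conditionI:
  assumes "finite I" "finite J" "\<And>i. i \<in> I \<Longrightarrow> 0 \<le> a i" "\<And>j. j \<in> J \<Longrightarrow> 0 \<le> b j"
    "sum a I = sum b J" "\<And>S. S \<subseteq> I \<Longrightarrow> sum a S \<le> sum b (neighbours E J S)"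
  shows "hall_condition E I J a b"
  using assms unfolding hall_condition_def by blast

lemma transport_planD:
  assumes "transport_plan E I J a b w"
  shows "\<And>i j. 0 \<le> w i j" "\<And>i j. w i j \<noteq> 0 \<Longrightarrow> E i j" "\<And>i j. i \<notin> I \<Longrightarrow> w i j = 0"
    "\<And>i j. j \<notin> J \<Longrightarrow> w i j = 0"
    "\<And>i. i \<in> I \<Longrightarrow> sum (w i) J = a i" "\<And>j. j \<in> J \<Longrightarrow> (\<Sum>i\<in>I. w i j) = b j"
  using assms unfolding transport_plan_def by auto

lemma hall_condition_support:
  assumes h: "hall_condition E I J a b"
  shows "hall_condition E {i \<in> I. a i \<noteq> 0} {j \<in> J. b j \<noteq> 0} a b"
proof -
  note hh = hall_conditionD[OF h]
  have drop_zeros: "sum f {x \<in> X. f x \<noteq> 0} = sum f X" if "finite X" for f :: "_ \<Rightarrow> real" and X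
    using that by (intro sum.mono_neutral_left) auto
  have nb: "neighbours E {j \<in> J. b j \<noteq> 0} S = {j \<in> neighbours E J S. b j \<noteq> 0}" for S
    unfolding neighbours_def by auto
  have "sum a S \<le> sum b (neighbours E {j \<in> J. b j \<noteq> 0} S)" if "S \<subseteq> {i \<in> I. a i \<noteq> 0}" for S
    using that hh(6)[of S] drop_zeros[of "neighbours E J S" b] hh(2) neighbours_subset
    unfolding nb by (metis (no_types, lifting) finite_subset mem_Collect_eq subset_eq)
  then show ?thesis
    using hh drop_zeros[of I a] drop_zeros[of J b] unfolding hall_condition_def by auto
qed

lemma transport_plan_from_support:
  assumes h: "hall_condition E I J a b"
    and w: "transport_plan E {i \<in> I. a i \<noteq> 0} {j \<in> J. b j \<noteq> 0} a b w"
  shows "transport_plan E I J a b w"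
proof -
  note hh = hall_conditionD[OF h] and ww = transport_planD[OF w]
  have "sum (w i) J = a i" if "i \<in> I" for i
  proof -
    have "sum (w i) J = sum (w i) {j \<in> J. b j \<noteq> 0}"
      using hh(2) ww(4) by (intro sum.mono_neutral_right) auto
    then show ?thesis using ww(3,5) that by (cases "a i = 0") auto
  qed
  moreover have "(\<Sum>i\<in>I. w i j) = b j" if "j \<in> J" for j
  proof -
    have "(\<Sum>i\<in>I. w i j) = (\<Sum>i\<in>{i \<in> I. a i \<noteq> 0}. w i j)"
      using hh(1) ww(3) by (intro sum.mono_neutral_right) auto
    then show ?thesis using ww(4,6) that by (cases "b j = 0") auto
  qed
  ultimately show ?thesis
    using w unfolding transport_plan_def by blast
qed

lemma hall_condition_tight_inside:
  assumes h: "hall_condition E I J a b" and S: "S \<subseteq> I" "sum a S = sum b (neighbours E J S)"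
  shows "hall_condition E S (neighbours E J S) a b"
proof -
  note hh = hall_conditionD[OF h]
  have "sum a T \<le> sum b (neighbours E (neighbours E J S) T)" if "T \<subseteq> S" for T
  proof -
    have "neighbours E (neighbours E J S) T = neighbours E J T"
      using that unfolding neighbours_def by blast
    then show ?thesis using that S(1) hh(6) by simp
  qed
  moreover have "finite S" "finite (neighbours E J S)"
    using finite_subset[OF S(1) hh(1)] finite_subset[OF neighbours_subset hh(2)] .
  ultimately show ?thesis
    using hh(3,4) S neighbours_subset[of E J S] by (intro hall_conditionI) auto
qed

lemma hall_condition_tight_outside:
  assumes h: "hall_condition E I J a b" and S: "S \<subseteq> I" "sum a S = sum b (neighbours E J S)"
  shows "hall_condition E (I - S) (J - neighbours E J S) a b"
proof -
  note hh = hall_conditionD[OF h]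
  have fin: "finite S" "finite (neighbours E J S)"
    using finite_subset[OF S(1) hh(1)] finite_subset[OF neighbours_subset hh(2)] .
  have "sum a T \<le> sum b (neighbours E (J - neighbours E J S) T)" if T: "T \<subseteq> I - S" for T
  proof -
    have "neighbours E (J - neighbours E J S) T = neighbours E J (T \<union> S) - neighbours E J S"
      unfolding neighbours_def by blast
    moreover have "finite T" "finite (neighbours E J (T \<union> S))"
      using finite_subset[OF _ hh(1), of T] T finite_subset[OF neighbours_subset hh(2)] by auto
    then have "sum a (T \<union> S) = sum a T + sum a S"
      using T fin by (intro sum.union_disjoint) auto
    moreover have "sum b (neighbours E J (T \<union> S) - neighbours E J S)
        = sum b (neighbours E J (T \<union> S)) - sum b (neighbours E J S)"
      using \<open>finite (neighbours E J (T \<union> S))\<close> neighbours_mono[of S "T \<union> S" E J]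
      by (intro sum_diff) auto
    moreover have "sum a (T \<union> S) \<le> sum b (neighbours E J (T \<union> S))"
      using T S by (intro hh(6)) auto
    ultimately show ?thesis using S(2) by simp
  qed
  moreover have "sum a (I - S) = sum b (J - neighbours E J S)"
    using sum_diff[OF hh(1) S(1), of a] sum_diff[OF hh(2) neighbours_subset[of E J S], of b] hh(5) S(2)
    by simp
  ultimately show ?thesis
    using hh(1-4) by (intro hall_conditionI) auto
qed

lemma transport_plan_glue:
  assumes h: "hall_condition E I J a b" and S: "S \<subseteq> I"
    and w1: "transport_plan E S (neighbours E J S) a b w1"
    and w2: "transport_plan E (I - S) (J - neighbours E J S) a b w2"
  shows "transport_plan E I J a b (\<lambda>i j. if i \<in> S then w1 i j else w2 i j)"
proof -
  note hh = hall_conditionD[OF h] and ww1 = transport_planD[OF w1] and ww2 = transport_planD[OF w2]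
  let ?N = "neighbours E J S"
  have rows: "(\<Sum>j\<in>J. if i \<in> S then w1 i j else w2 i j) = a i" if "i \<in> I" for i
  proof -
    have "sum (w1 i) J = sum (w1 i) ?N"
      using hh(2) ww1(4) neighbours_subset[of E J S] by (intro sum.mono_neutral_right) auto
    moreover have "sum (w2 i) J = sum (w2 i) (J - ?N)"
      using hh(2) ww2(4) by (intro sum.mono_neutral_right) auto
    ultimately show ?thesis using that ww1(5) ww2(5) by (cases "i \<in> S") auto
  qed
  have cols: "(\<Sum>i\<in>I. if i \<in> S then w1 i j else w2 i j) = b j" if "j \<in> J" for j
  proof -
    have "(\<Sum>i\<in>I. if i \<in> S then w1 i j else w2 i j) = (\<Sum>i\<in>S. w1 i j) + (\<Sum>i\<in>I - S. w2 i j)"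
      using hh(1) S by (simp add: sum.If_cases Int_absorb1 Diff_eq)
    moreover have "(\<Sum>i\<in>S. w1 i j) = (if j \<in> ?N then b j else 0)"
      using ww1(4,6) by (cases "j \<in> ?N") simp_all
    moreover have "(\<Sum>i\<in>I - S. w2 i j) = (if j \<in> ?N then 0 else b j)"
      using ww2(4,6) that by (cases "j \<in> ?N") simp_all
    ultimately show ?thesis by simp
  qed
  have "E i j \<and> i \<in> I \<and> j \<in> J" if "(if i \<in> S then w1 i j else w2 i j) \<noteq> 0" for i j
    using that w1 w2 S neighbours_subset[of E J S] unfolding transport_plan_def
    by (auto split: if_splits)
  then show ?thesis
    using ww1(1) ww2(1) rows cols unfolding transport_plan_def by simp
qed

lemma sum_minus_delta:
  fixes f :: "'a \<Rightarrow> real"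
  assumes "finite S"
  shows "(\<Sum>i\<in>S. f i - (if i = k then t else 0)) = sum f S - (if k \<in> S then t else 0)"
  using assms by (simp add: sum_subtractf)

lemma hall_condition_shift:
  assumes h: "hall_condition E I J a b" and edge: "i0 \<in> I" "j0 \<in> J" "E i0 j0"
    and t: "0 \<le> t" "t \<le> a i0" "t \<le> b j0"
    and slack: "\<And>S. S \<subseteq> I \<Longrightarrow> i0 \<notin> S \<Longrightarrow> j0 \<in> neighbours E J S \<Longrightarrow>
      t \<le> sum b (neighbours E J S) - sum a S"
  shows "hall_condition E I J (\<lambda>i. a i - (if i = i0 then t else 0)) (\<lambda>j. b j - (if j = j0 then t else 0))"
proof (rule hall_conditionI)
  note hh = hall_conditionD[OF h]
  show "(\<Sum>i\<in>S. a i - (if i = i0 then t else 0)) \<le>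
      (\<Sum>j\<in>neighbours E J S. b j - (if j = j0 then t else 0))" if S: "S \<subseteq> I" for S
  proof -
    have "finite S" "finite (neighbours E J S)"
      using finite_subset[OF S hh(1)] finite_subset[OF neighbours_subset hh(2)] .
    moreover have "i0 \<in> S \<Longrightarrow> j0 \<in> neighbours E J S"
      using edge unfolding neighbours_def by blast
    ultimately show ?thesis
      using hh(6)[OF S] slack[OF S] by (auto simp: sum_minus_delta)
  qed
qed (use hall_conditionD[OF h] edge t in \<open>auto simp: sum_minus_delta\<close>)

lemma transport_plan_shift:
  assumes w: "transport_plan E I J (\<lambda>i. a i - (if i = i0 then t else 0))
      (\<lambda>j. b j - (if j = j0 then t else 0)) w"
    and edge: "i0 \<in> I" "j0 \<in> J" "E i0 j0" and t: "0 \<le> t" and fin: "finite I" "finite J"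
  shows "transport_plan E I J a b (\<lambda>i j. w i j + (if i = i0 \<and> j = j0 then t else 0))"
proof -
  note ww = transport_planD[OF w]
  have rows: "(\<Sum>j\<in>J. w i j + (if i = i0 \<and> j = j0 then t else 0)) = a i" if "i \<in> I" for i
    using ww(5)[OF that] fin edge by (simp add: sum.distrib)
  have cols: "(\<Sum>i\<in>I. w i j + (if i = i0 \<and> j = j0 then t else 0)) = b j" if "j \<in> J" for j
    using ww(6)[OF that] fin edge by (simp add: sum.distrib)
  have "E i j \<and> i \<in> I \<and> j \<in> J" if "w i j + (if i = i0 \<and> j = j0 then t else 0) \<noteq> 0" for i j
    using that w edge unfolding transport_plan_def by (auto split: if_splits)
  then show ?thesis
    using ww(1) t rows cols unfolding transport_plan_def by (simp add: add_nonneg_nonneg)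
qed

definition hall_reducible ::
    "('i \<Rightarrow> 'j \<Rightarrow> bool) \<Rightarrow> 'i set \<Rightarrow> 'j set \<Rightarrow> ('i \<Rightarrow> real) \<Rightarrow> ('j \<Rightarrow> real) \<Rightarrow> bool" where
  "hall_reducible E I J a b \<longleftrightarrow> (\<exists>i\<in>I. a i = 0) \<or> (\<exists>j\<in>J. b j = 0) \<or>
     (\<exists>S. S \<subseteq> I \<and> S \<noteq> {} \<and> S \<noteq> I \<and> sum a S = sum b (neighbours E J S))"

lemma transport_plan_if_reducible:
  assumes IH: "\<And>I' J' a' b'. card I' + card J' < card I + card J \<Longrightarrow>
      hall_condition E I' J' a' b' \<Longrightarrow> \<exists>w. transport_plan E I' J' a' b' w"
    and h: "hall_condition E I J a b" and r: "hall_reducible E I J a b"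
  shows "\<exists>w. transport_plan E I J a b w"
proof -
  note hh = hall_conditionD[OF h]
  let ?I = "{i \<in> I. a i \<noteq> 0}" and ?J = "{j \<in> J. b j \<noteq> 0}"
  consider (zero) "?I \<noteq> I \<or> ?J \<noteq> J"
    | (tight) S where "S \<subseteq> I" "S \<noteq> {}" "S \<noteq> I" "sum a S = sum b (neighbours E J S)"
    using r unfolding hall_reducible_def by blast
  then show ?thesis
  proof cases
    case zero
    have "card ?I \<le> card I" "card ?J \<le> card J"
      using hh(1,2) by (auto intro: card_mono)
    moreover have "card ?I < card I \<or> card ?J < card J"
      using zero hh(1,2) by (auto intro!: psubset_card_mono)
    ultimately obtain w where "transport_plan E ?I ?J a b w"
      using IH[OF _ hall_condition_support[OF h]] by fastforce
    then show ?thesis using transport_plan_from_support[OF h] by blast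
  next
    case tight
    let ?N = "neighbours E J S"
    have "finite S" using finite_subset[OF tight(1) hh(1)] .
    then have "card S < card I" "card (I - S) < card I"
      using tight hh(1) by (auto intro!: psubset_card_mono)
    moreover have "card ?N \<le> card J" "card (J - ?N) \<le> card J"
      using hh(2) neighbours_subset[of E J S] by (auto intro: card_mono)
    ultimately obtain w1 w2 where "transport_plan E S ?N a b w1"
        "transport_plan E (I - S) (J - ?N) a b w2"
      using IH[OF _ hall_condition_tight_inside[OF h tight(1,4)]]
        IH[OF _ hall_condition_tight_outside[OF h tight(1,4)]] by fastforce
    then show ?thesis using transport_plan_glue[OF h tight(1)] by blast
  qed
qed

lemma hall_condition_saturating_shift:
  assumes h: "hall_condition E I J a b" and r: "\<not> hall_reducible E I J a b" and i0: "i0 \<in> I"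
  obtains j0 t where "j0 \<in> J" "E i0 j0" "0 < t"
    "hall_condition E I J (\<lambda>i. a i - (if i = i0 then t else 0)) (\<lambda>j. b j - (if j = j0 then t else 0))"
    "hall_reducible E I J (\<lambda>i. a i - (if i = i0 then t else 0)) (\<lambda>j. b j - (if j = j0 then t else 0))"
proof -
  note hh = hall_conditionD[OF h]
  have nonzero: "\<forall>i\<in>I. a i \<noteq> 0" "\<forall>j\<in>J. b j \<noteq> 0"
    and not_tight: "\<And>S. S \<subseteq> I \<Longrightarrow> S \<noteq> {} \<Longrightarrow> S \<noteq> I \<Longrightarrow> sum a S \<noteq> sum b (neighbours E J S)"
    using r unfolding hall_reducible_def by blast+
  have apos: "0 < a i" if "i \<in> I" for i
    using hh(3)[OF that] nonzero(1) that by (simp add: order_less_le)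
  have bpos: "0 < b j" if "j \<in> J" for j
    using hh(4)[OF that] nonzero(2) that by (simp add: order_less_le)
  have "a i0 \<le> sum b (neighbours E J {i0})" using hh(6)[of "{i0}"] i0 by simp
  then have "neighbours E J {i0} \<noteq> {}" using apos[OF i0] by auto
  then obtain j0 where j0: "j0 \<in> J" "E i0 j0" unfolding neighbours_def by blast
  define SS where "SS = {S. S \<subseteq> I \<and> i0 \<notin> S \<and> j0 \<in> neighbours E J S}"
  define slack where "slack S = sum b (neighbours E J S) - sum a S" for S
  define t where "t = Min ({a i0, b j0} \<union> slack ` SS)"
  have "SS \<subseteq> Pow I" unfolding SS_def by blast
  then have fin: "finite ({a i0, b j0} \<union> slack ` SS)"
    using finite_subset hh(1) by blast
  have SS_proper: "S \<subseteq> I" "S \<noteq> {}" "S \<noteq> I" if "S \<in> SS" for S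
    using that i0 unfolding SS_def neighbours_def by auto
  have "0 < slack S" if "S \<in> SS" for S
    using hh(6)[OF SS_proper(1)[OF that]] not_tight[OF SS_proper[OF that]]
    unfolding slack_def by linarith
  then have t_pos: "0 < t"
    unfolding t_def using fin apos[OF i0] bpos[OF j0(1)] by (subst Min_gr_iff) auto
  have t_le: "t \<le> a i0" "t \<le> b j0" "\<And>S. S \<in> SS \<Longrightarrow> t \<le> slack S"
    unfolding t_def using fin by (intro Min_le; simp)+
  have shifted: "hall_condition E I J (\<lambda>i. a i - (if i = i0 then t else 0)) (\<lambda>j. b j - (if j = j0 then t else 0))"
    using t_pos t_le i0 j0
    by (intro hall_condition_shift[OF h]) (auto simp: SS_def slack_def)
  have "t \<in> {a i0, b j0} \<union> slack ` SS"
    unfolding t_def using fin by (intro Min_in) auto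
  then have "hall_reducible E I J (\<lambda>i. a i - (if i = i0 then t else 0)) (\<lambda>j. b j - (if j = j0 then t else 0))"
  proof (elim UnE insertE imageE)
    fix S assume "t = slack S" "S \<in> SS"
    moreover have "finite S" "finite (neighbours E J S)"
      using finite_subset[OF SS_proper(1)[OF \<open>S \<in> SS\<close>] hh(1)]
        finite_subset[OF neighbours_subset hh(2)] .
    ultimately show ?thesis
      using SS_proper[of S] unfolding hall_reducible_def
      by (auto simp: SS_def slack_def sum_minus_delta intro!: exI[of _ S])
  qed (use i0 j0 in \<open>auto simp: hall_reducible_def\<close>)
  then show ?thesis using that j0 t_pos shifted by blast
qed

theorem transport_plan_exists:
  assumes "hall_condition E I J a b"
  shows "\<exists>w. transport_plan E I J a b w"
  using assms
proof (induction "card I + card J" arbitrary: I J a b rule: less_induct)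
  case less
  note hh = hall_conditionD[OF less.prems]
  show ?case
  proof (cases "hall_reducible E I J a b")
    case True
    then show ?thesis using transport_plan_if_reducible less by blast
  next
    case irreducible: False
    show ?thesis
    proof (cases "I = {}")
      case True
      have "\<forall>j\<in>J. b j = 0"
        using hh(2,4,5) True by (simp add: sum_nonneg_eq_0_iff)
      then have "J = {}" using irreducible unfolding hall_reducible_def by blast
      then have "transport_plan E I J a b (\<lambda>_ _. 0)"
        using True unfolding transport_plan_def by simp
      then show ?thesis by blast
    next
      case False
      then obtain i0 where i0: "i0 \<in> I" by blast
      obtain j0 t where j0: "j0 \<in> J" "E i0 j0" and t: "0 < t" and
        shifted: "hall_condition E I J (\<lambda>i. a i - (if i = i0 then t else 0)) (\<lambda>j. b j - (if j = j0 then t else 0))"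
          "hall_reducible E I J (\<lambda>i. a i - (if i = i0 then t else 0)) (\<lambda>j. b j - (if j = j0 then t else 0))"
        using hall_condition_saturating_shift[OF less.prems irreducible i0] by blast
      obtain w where "transport_plan E I J (\<lambda>i. a i - (if i = i0 then t else 0))
          (\<lambda>j. b j - (if j = j0 then t else 0)) w"
        using transport_plan_if_reducible[OF _ shifted] less.hyps by blast
      from transport_plan_shift[OF this i0 j0 less_imp_le[OF t] hh(1,2)]
      show ?thesis by blast
    qed
  qed
qed

section \<open>Finitely additive probabilities and cells\<close>

context algebra
begin

lemma fa_prob_empty: "fa_prob M \<Omega> \<mu> \<Longrightarrow> \<mu> {} = 0"
  unfolding fa_prob_def by (metis Un_empty empty_sets add_cancel_right_right inf_bot_left)

lemma fa_prob_mono: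
  assumes "fa_prob M \<Omega> \<mu>" "S \<in> M" "T \<in> M" "S \<subseteq> T"
  shows "\<mu> S \<le> \<mu> T"
proof -
  have "\<mu> T = \<mu> S + \<mu> (T - S)"
    using assms Diff_partition[OF assms(4)] unfolding fa_prob_def by (metis Diff Diff_disjoint)
  then show ?thesis using assms(1,2,3) unfolding fa_prob_def by auto
qed

lemma fa_prob_le_1: "fa_prob M \<Omega> \<mu> \<Longrightarrow> S \<in> M \<Longrightarrow> \<mu> S \<le> 1"
  using fa_prob_mono[of \<mu> S \<Omega>] sets_into_space unfolding fa_prob_def by auto

lemma fa_prob_finite_UN:
  assumes \<mu>: "fa_prob M \<Omega> \<mu>" and "finite I" "\<And>i. i \<in> I \<Longrightarrow> A i \<in> M" "disjoint_family_on A I"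
  shows "\<mu> (\<Union>i\<in>I. A i) = (\<Sum>i\<in>I. \<mu> (A i))"
  using assms(2-4)
proof (induction I rule: finite_induct)
  case empty
  then show ?case using fa_prob_empty[OF \<mu>] by simp
next
  case (insert i I)
  have "A i \<inter> (\<Union>j\<in>I. A j) = {}"
    using insert.hyps(2) insert.prems(2) unfolding disjoint_family_on_def by fastforce
  then have "\<mu> (\<Union>j\<in>insert i I. A j) = \<mu> (A i) + \<mu> (\<Union>j\<in>I. A j)"
    using \<mu> insert by (simp add: fa_prob_def finite_UN)
  then show ?case
    using insert disjoint_family_on_mono[of I "insert i I" A] by (simp add: subset_insertI)
qed

end

definition profile :: "'a set set \<Rightarrow> 'a \<Rightarrow> 'a set set" where
  "profile F x = {p \<in> F. x \<in> p}"

definition cell :: "'a set \<Rightarrow> 'a set set \<Rightarrow> 'a set set \<Rightarrow> 'a set" where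
  "cell \<Omega> F s = {x \<in> \<Omega>. profile F x = s}"

lemma finite_profiles: "finite F \<Longrightarrow> finite (profile F ` \<Omega>)"
  by (rule finite_subset[of _ "Pow F"]) (auto simp: profile_def)

lemma disjoint_family_cell: "disjoint_family_on (cell \<Omega> F) S"
  unfolding disjoint_family_on_def cell_def by auto

lemma Union_cells:
  assumes "p \<subseteq> \<Omega>"
  shows "(\<Union>s\<in>{s \<in> profile F ` \<Omega>. p \<in> s}. cell \<Omega> F s) = (if p \<in> F then p else {})"
  using assms unfolding cell_def profile_def by auto

lemma Union_all_cells: "(\<Union>s\<in>profile F ` \<Omega>. cell \<Omega> F s) = \<Omega>"
  unfolding cell_def by auto

lemma (in algebra) cell_in_sets:
  assumes "finite F" "F \<subseteq> M"
  shows "cell \<Omega> F s \<in> M"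
proof -
  have member: "{x \<in> \<Omega>. x \<in> p} \<in> M" if "p \<in> F" for p
  proof -
    have "{x \<in> \<Omega>. x \<in> p} = p" using that assms(2) sets_into_space by blast
    then show ?thesis using that assms(2) by auto
  qed
  have literal: "{x \<in> \<Omega>. x \<in> p \<longleftrightarrow> p \<in> s} \<in> M" if "p \<in> F" for p
    using member[OF that] sets_Collect_neg[OF member[OF that]] by (cases "p \<in> s") auto
  have "cell \<Omega> F s = {x \<in> \<Omega>. s \<subseteq> F \<and> (\<forall>p\<in>F. x \<in> p \<longleftrightarrow> p \<in> s)}"
    unfolding cell_def profile_def by auto
  also have "\<dots> \<in> M"
  proof (cases "F = {}")
    case False
    then show ?thesis
      using literal assms(1) by (intro sets_Collect_conj sets_Collect_const sets_Collect_finite_All') auto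
  qed (simp add: sets_Collect_const)
  finally show ?thesis .
qed

lemma (in algebra) fa_prob_sum_cells:
  assumes \<mu>: "fa_prob M \<Omega> \<mu>" and F: "finite F" "F \<subseteq> M" and S: "S \<subseteq> profile F ` \<Omega>"
  shows "\<mu> (\<Union>s\<in>S. cell \<Omega> F s) = (\<Sum>s\<in>S. \<mu> (cell \<Omega> F s))"
  using finite_subset[OF S finite_profiles[OF F(1)]] cell_in_sets[OF F] disjoint_family_cell
  by (intro fa_prob_finite_UN[OF \<mu>]) auto

lemma (in algebra) fa_prob_eq_sum_cells:
  assumes \<mu>: "fa_prob M \<Omega> \<mu>" and F: "finite F" "F \<subseteq> M" and p: "p \<in> F"
  shows "\<mu> p = (\<Sum>s\<in>profile F ` \<Omega>. if p \<in> s then \<mu> (cell \<Omega> F s) else 0)"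
proof -
  have "\<mu> p = (\<Sum>s\<in>{s \<in> profile F ` \<Omega>. p \<in> s}. \<mu> (cell \<Omega> F s))"
    using fa_prob_sum_cells[OF \<mu> F, of "{s \<in> profile F ` \<Omega>. p \<in> s}"] Union_cells[of p \<Omega> F]
      p F(2) sets_into_space by auto
  then show ?thesis
    using finite_profiles[OF F(1)] by (simp add: sum.If_cases Int_def)
qed

lemma (in algebra) fa_prob_sum_all_cells:
  assumes \<mu>: "fa_prob M \<Omega> \<mu>" and F: "finite F" "F \<subseteq> M"
  shows "(\<Sum>s\<in>profile F ` \<Omega>. \<mu> (cell \<Omega> F s)) = 1"
  using fa_prob_sum_cells[OF \<mu> F order_refl] \<mu> unfolding Union_all_cells fa_prob_def by simp

section \<open>Amalgamation of finitely additive probabilities\<close>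

lemma fa_prob_point_masses:
  assumes "finite K" "\<And>k. k \<in> K \<Longrightarrow> 0 \<le> c k" "sum c K = 1" "\<And>k. k \<in> K \<Longrightarrow> c k \<noteq> 0 \<Longrightarrow> z k \<in> X"
  shows "fa_prob (Pow X) X (\<lambda>T. \<Sum>k\<in>K. if z k \<in> T then c k else 0)"
proof -
  have "(\<Sum>k\<in>K. if z k \<in> X then c k else 0) = sum c K"
    using assms(4) by (intro sum.cong) auto
  moreover have "(\<Sum>k\<in>K. if z k \<in> S \<union> T then c k else 0) =
      (\<Sum>k\<in>K. if z k \<in> S then c k else 0) + (\<Sum>k\<in>K. if z k \<in> T then c k else 0)"
    if "S \<inter> T = {}" for S T
    using that by (subst sum.distrib[symmetric]) (intro sum.cong; auto)
  ultimately show ?thesis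
    using assms(2,3) unfolding fa_prob_def by (auto intro: sum_nonneg)
qed

lemma transport_plan_row_marginal:
  assumes "transport_plan E I J a b w"
  shows "(\<Sum>(i, j)\<in>I \<times> J. if i \<in> G then w i j else 0) = (\<Sum>i\<in>I. if i \<in> G then a i else 0)"
proof -
  have "(\<Sum>(i, j)\<in>I \<times> J. if i \<in> G then w i j else 0) = (\<Sum>i\<in>I. \<Sum>j\<in>J. if i \<in> G then w i j else 0)"
    by (simp add: sum.cartesian_product)
  also have "\<dots> = (\<Sum>i\<in>I. if i \<in> G then a i else 0)"
    using transport_planD(5)[OF assms(1)] by (intro sum.cong) auto
  finally show ?thesis .
qed

lemma transport_plan_column_marginal:
  assumes "transport_plan E I J a b w"
  shows "(\<Sum>(i, j)\<in>I \<times> J. if j \<in> H then w i j else 0) = (\<Sum>j\<in>J. if j \<in> H then b j else 0)"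
proof -
  have "(\<Sum>(i, j)\<in>I \<times> J. if j \<in> H then w i j else 0) = (\<Sum>i\<in>I. \<Sum>j\<in>J. if j \<in> H then w i j else 0)"
    by (simp add: sum.cartesian_product)
  also have "\<dots> = (\<Sum>j\<in>J. \<Sum>i\<in>I. if j \<in> H then w i j else 0)"
    by (rule sum.swap)
  also have "\<dots> = (\<Sum>j\<in>J. if j \<in> H then b j else 0)"
    using transport_planD(6)[OF assms(1)] by (intro sum.cong) auto
  finally show ?thesis .
qed

lemma closedin_conditional_eq:
  assumes "b \<Longrightarrow> continuous_map T euclideanreal g" "b \<Longrightarrow> continuous_map T euclideanreal h"
  shows "closedin T {x \<in> topspace T. b \<longrightarrow> g x = h x}"
  using assms closedin_continuous_maps_eq[of euclideanreal T g h] by (cases b) auto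

lemma compact_space_unit_cube: "compact_space (product_topology (\<lambda>_. top_of_set {0..1::real}) I)"
  unfolding compact_space_product_topology by (simp add: compact_space_subtopology)

locale consistent_fa_probs =
  P: algebra X P + Q: algebra X Q
  for X :: "'a set" and P Q :: "'a set set" +
  fixes \<mu> \<nu> :: "'a set \<Rightarrow> real"
  assumes fa_prob_P: "fa_prob P X \<mu>" and fa_prob_Q: "fa_prob Q X \<nu>"
    and consistent: "\<And>p q. p \<in> P \<Longrightarrow> q \<in> Q \<Longrightarrow> p \<subseteq> q \<Longrightarrow> \<mu> p \<le> \<nu> q"
begin

lemma hall_condition_cells:
  assumes P0: "finite P0" "P0 \<subseteq> P" and Q0: "finite Q0" "Q0 \<subseteq> Q"
  shows "hall_condition (\<lambda>s t. cell X P0 s \<inter> cell X Q0 t \<noteq> {}) (profile P0 ` X) (profile Q0 ` X)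
    (\<lambda>s. \<mu> (cell X P0 s)) (\<lambda>t. \<nu> (cell X Q0 t))"
    (is "hall_condition ?E ?I ?J ?a ?b")
proof (rule hall_conditionI)
  show "sum ?a S \<le> sum ?b (neighbours ?E ?J S)" if S: "S \<subseteq> ?I" for S
  proof -
    let ?U = "\<Union>s\<in>S. cell X P0 s" and ?V = "\<Union>t\<in>neighbours ?E ?J S. cell X Q0 t"
    have "?U \<in> P"
      using finite_subset[OF S finite_profiles[OF P0(1)]] P.cell_in_sets[OF P0] by auto
    moreover have "?V \<in> Q"
      using finite_subset[OF neighbours_subset finite_profiles[OF Q0(1)]] Q.cell_in_sets[OF Q0]
      by (intro Q.finite_UN) auto
    moreover have "?U \<subseteq> ?V"
      unfolding neighbours_def cell_def by blast
    ultimately have "\<mu> ?U \<le> \<nu> ?V" by (rule consistent)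
    then show ?thesis
      using P.fa_prob_sum_cells[OF fa_prob_P P0 S]
        Q.fa_prob_sum_cells[OF fa_prob_Q Q0 neighbours_subset[of ?E ?J S]] by linarith
  qed
qed (use finite_profiles P0 Q0 P.cell_in_sets Q.cell_in_sets fa_prob_P fa_prob_Q
       P.fa_prob_sum_all_cells Q.fa_prob_sum_all_cells in \<open>auto simp: fa_prob_def\<close>)

lemma finite_amalgamation:
  assumes P0: "finite P0" "P0 \<subseteq> P" and Q0: "finite Q0" "Q0 \<subseteq> Q"
  shows "\<exists>\<omega>. fa_prob (Pow X) X \<omega> \<and> agree P0 \<omega> \<mu> \<and> agree Q0 \<omega> \<nu>"
proof -
  let ?I = "profile P0 ` X" and ?J = "profile Q0 ` X"
  obtain w where w: "transport_plan (\<lambda>s t. cell X P0 s \<inter> cell X Q0 t \<noteq> {}) ?I ?J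
      (\<lambda>s. \<mu> (cell X P0 s)) (\<lambda>t. \<nu> (cell X Q0 t)) w"
    using transport_plan_exists[OF hall_condition_cells[OF P0 Q0]] by blast
  note ww = transport_planD[OF w]
  define z where "z = (\<lambda>(s, t). SOME x. x \<in> cell X P0 s \<inter> cell X Q0 t)"
  have z: "z (s, t) \<in> cell X P0 s \<inter> cell X Q0 t" if "w s t \<noteq> 0" for s t
    using ww(2)[OF that] unfolding z_def prod.case some_in_eq .
  define \<omega> where "\<omega> T = (\<Sum>k\<in>?I \<times> ?J. if z k \<in> T then case_prod w k else 0)" for T
  have as_marginal: "\<omega> T = (\<Sum>(s, t)\<in>?I \<times> ?J. if s \<in> G \<and> t \<in> H then w s t else 0)"
    if "\<And>s t. w s t \<noteq> 0 \<Longrightarrow> z (s, t) \<in> T \<longleftrightarrow> s \<in> G \<and> t \<in> H" for T G H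
    unfolding \<omega>_def
  proof (intro sum.cong refl)
    fix k assume "k \<in> ?I \<times> ?J"
    show "(if z k \<in> T then case_prod w k else 0) =
        (case k of (s, t) \<Rightarrow> if s \<in> G \<and> t \<in> H then w s t else 0)"
      using that[of "fst k" "snd k"] by (cases "case_prod w k = 0") (auto split: prod.split)
  qed
  have "(\<Sum>(s, t)\<in>?I \<times> ?J. w s t) = 1"
    using transport_plan_row_marginal[OF w, of UNIV]
      P.fa_prob_sum_all_cells[OF fa_prob_P P0] by simp
  then have "fa_prob (Pow X) X \<omega>"
    unfolding \<omega>_def using finite_profiles P0(1) Q0(1) ww(1) z unfolding cell_def
    by (intro fa_prob_point_masses) (auto simp: split_beta)
  moreover have "\<omega> p = \<mu> p" if p: "p \<in> P0" for p
  proof -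
    have "\<omega> p = (\<Sum>(s, t)\<in>?I \<times> ?J. if s \<in> {s. p \<in> s} \<and> t \<in> UNIV then w s t else 0)"
      using z p by (intro as_marginal) (auto simp: cell_def profile_def)
    also have "\<dots> = (\<Sum>s\<in>?I. if s \<in> {s. p \<in> s} then \<mu> (cell X P0 s) else 0)"
      using transport_plan_row_marginal[OF w, of "{s. p \<in> s}"] by simp
    also have "\<dots> = \<mu> p"
      using P.fa_prob_eq_sum_cells[OF fa_prob_P P0 p] by simp
    finally show ?thesis .
  qed
  moreover have "\<omega> q = \<nu> q" if q: "q \<in> Q0" for q
  proof -
    have "\<omega> q = (\<Sum>(s, t)\<in>?I \<times> ?J. if s \<in> UNIV \<and> t \<in> {t. q \<in> t} then w s t else 0)"
      using z q by (intro as_marginal) (auto simp: cell_def profile_def)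
    also have "\<dots> = (\<Sum>t\<in>?J. if t \<in> {t. q \<in> t} then \<nu> (cell X Q0 t) else 0)"
      using transport_plan_column_marginal[OF w, of "{t. q \<in> t}"] by simp
    also have "\<dots> = \<nu> q"
      using Q.fa_prob_eq_sum_cells[OF fa_prob_Q Q0 q] by simp
    finally show ?thesis .
  qed
  ultimately show ?thesis unfolding agree_def by blast
qed

theorem amalgamation:
  assumes R: "algebra X R" "P \<subseteq> R" "Q \<subseteq> R"
  shows "\<exists>\<omega>. fa_prob R X \<omega> \<and> agree P \<omega> \<mu> \<and> agree Q \<omega> \<nu>"
proof -
  interpret R: algebra X R by (rule R(1))
  define Cube where "Cube = product_topology (\<lambda>_. top_of_set {0..1::real}) R"
  have coordinate: "continuous_map Cube euclideanreal (\<lambda>f. f S)" if "S \<in> R" for S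
    using continuous_map_product_projection[OF that, of "\<lambda>_. top_of_set {0..1::real}"]
    unfolding Cube_def by (simp add: continuous_map_in_subtopology)
  define C where "C = (\<lambda>(S, T). {f \<in> topspace Cube. (S \<inter> T = {} \<longrightarrow> f (S \<union> T) = f S + f T) \<and>
    (S \<in> P \<longrightarrow> f S = \<mu> S) \<and> (S \<in> Q \<longrightarrow> f S = \<nu> S)})"
  have closed: "closedin Cube (C (S, T))" if "S \<in> R" "T \<in> R" for S T
  proof -
    have "C (S, T) = {f \<in> topspace Cube. S \<inter> T = {} \<longrightarrow> f (S \<union> T) = f S + f T} \<inter>
        {f \<in> topspace Cube. S \<in> P \<longrightarrow> f S = \<mu> S} \<inter> {f \<in> topspace Cube. S \<in> Q \<longrightarrow> f S = \<nu> S}"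
      unfolding C_def by auto
    then show ?thesis
      using that coordinate R.Un[OF that]
      by (auto intro!: closedin_Int closedin_conditional_eq continuous_map_add)
  qed
  have finite_intersections: "\<Inter>\<F> \<noteq> {}" if \<F>: "finite \<F>" "\<F> \<subseteq> C ` (R \<times> R)" for \<F>
  proof -
    obtain Ix where Ix: "Ix \<subseteq> R \<times> R" "finite Ix" "\<F> = C ` Ix"
      using finite_subset_image[OF \<F>] by blast
    obtain \<omega> where \<omega>: "fa_prob (Pow X) X \<omega>" "agree (P \<inter> fst ` Ix) \<omega> \<mu>" "agree (Q \<inter> fst ` Ix) \<omega> \<nu>"
      using finite_amalgamation[of "P \<inter> fst ` Ix" "Q \<inter> fst ` Ix"] Ix(2) by auto
    have "\<omega> S \<in> {0..1}" if "S \<in> R" for S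
      using algebra.fa_prob_le_1[OF algebra_Pow \<omega>(1)] \<omega>(1) R.sets_into_space[OF that]
      unfolding fa_prob_def by auto
    then have "restrict \<omega> R \<in> topspace Cube"
      unfolding Cube_def by simp
    moreover have member: "restrict \<omega> R \<in> C (S, T)" if ST: "(S, T) \<in> Ix" for S T
    proof -
      have "S \<in> R" "T \<in> R" using ST Ix(1) by auto
      moreover have "S \<in> P \<Longrightarrow> \<omega> S = \<mu> S" "S \<in> Q \<Longrightarrow> \<omega> S = \<nu> S"
        using \<omega>(2,3) ST unfolding agree_def by force+
      ultimately show ?thesis
        using \<open>restrict \<omega> R \<in> topspace Cube\<close> \<omega>(1) R.sets_into_space R.Un
        unfolding C_def fa_prob_def by simp
    qed
    then have "restrict \<omega> R \<in> C i" if "i \<in> Ix" for i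
      using member[of "fst i" "snd i"] that by simp
    then show ?thesis unfolding Ix(3) by blast
  qed
  have "compact_space Cube"
    unfolding Cube_def by (rule compact_space_unit_cube)
  then have "\<Inter>(C ` (R \<times> R)) \<noteq> {}"
    by (rule compact_space_fip[THEN iffD1, rule_format])
      (use closed finite_intersections in auto)
  then obtain f where f: "\<And>S T. S \<in> R \<Longrightarrow> T \<in> R \<Longrightarrow> f \<in> C (S, T)" by blast
  have "f \<in> topspace Cube" using f[OF R.top R.top] unfolding C_def by simp
  then have "0 \<le> f S" if "S \<in> R" for S
    using that unfolding Cube_def by auto
  moreover have "f (S \<union> T) = f S + f T" if "S \<in> R" "T \<in> R" "S \<inter> T = {}" for S T
    using f[OF that(1,2)] that(3) unfolding C_def by simp
  moreover have "f S = \<mu> S" if "S \<in> P" for S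
    using f[OF _ R.top, of S] that R(2) unfolding C_def by auto
  moreover have "f S = \<nu> S" if "S \<in> Q" for S
    using f[OF _ R.top, of S] that R(3) unfolding C_def by auto
  ultimately have "fa_prob R X f" "agree P f \<mu>" "agree Q f \<nu>"
    using fa_prob_P P.top unfolding fa_prob_def agree_def by auto
  then show ?thesis by blast
qed

end

section \<open>Definable sets\<close>

fun rename_trm :: "(nat \<Rightarrow> nat) \<Rightarrow> 'f trm \<Rightarrow> 'f trm" where
  "rename_trm \<pi> (Var i) = Var (\<pi> i)"
| "rename_trm \<pi> (Fn f ts) = Fn f (map (rename_trm \<pi>) ts)"

fun rename_fm :: "(nat \<Rightarrow> nat) \<Rightarrow> ('f, 'r) fm \<Rightarrow> ('f, 'r) fm" where
  "rename_fm \<pi> FF = FF"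
| "rename_fm \<pi> (Eq s t) = Eq (rename_trm \<pi> s) (rename_trm \<pi> t)"
| "rename_fm \<pi> (Rel r ts) = Rel r (map (rename_trm \<pi>) ts)"
| "rename_fm \<pi> (Neg \<phi>) = Neg (rename_fm \<pi> \<phi>)"
| "rename_fm \<pi> (Conj \<phi> \<psi>) = Conj (rename_fm \<pi> \<phi>) (rename_fm \<pi> \<psi>)"
| "rename_fm \<pi> (Ex v \<phi>) = Ex (\<pi> v) (rename_fm \<pi> \<phi>)"

lemma teval_rename_trm: "teval M e (rename_trm \<pi> t) = teval M (e \<circ> \<pi>) t"
  by (induction t) (simp_all cong: map_cong)

lemma tvars_rename_trm: "tvars (rename_trm \<pi> t) = \<pi> ` tvars t"
  by (induction t) auto

lemma sat_rename_fm: "inj \<pi> \<Longrightarrow> sat M e (rename_fm \<pi> \<phi>) \<longleftrightarrow> sat M (e \<circ> \<pi>) \<phi>"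
proof (induction \<phi> arbitrary: e)
  case (Ex v \<phi>)
  have "(e(\<pi> v := a)) \<circ> \<pi> = (e \<circ> \<pi>)(v := a)" for a
    using Ex.prems by (auto simp: inj_def)
  then have "sat M (e(\<pi> v := a)) (rename_fm \<pi> \<phi>) \<longleftrightarrow> sat M ((e \<circ> \<pi>)(v := a)) \<phi>" for a
    by (simp only: Ex.IH[OF Ex.prems])
  then show ?case by (simp only: rename_fm.simps sat.simps)
qed (simp_all add: teval_rename_trm comp_def cong: map_cong)

lemma fvars_rename_fm: "inj \<pi> \<Longrightarrow> fvars (rename_fm \<pi> \<phi>) = \<pi> ` fvars \<phi>"
  by (induction \<phi>) (auto simp: tvars_rename_trm image_set_diff)

lemma sat_Exs:
  "sat M e (foldr Ex vs \<phi>) \<longleftrightarrow> (\<exists>g. (\<forall>i. i \<notin> set vs \<longrightarrow> g i = e i) \<and> sat M g \<phi>)"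
proof (induction vs arbitrary: e)
  case (Cons v vs)
  show ?case
  proof
    assume "sat M e (foldr Ex (v # vs) \<phi>)"
    then obtain a g where g: "\<forall>i. i \<notin> set vs \<longrightarrow> g i = (e(v := a)) i" "sat M g \<phi>"
      using Cons.IH by auto
    then have "\<forall>i. i \<notin> set (v # vs) \<longrightarrow> g i = e i" by auto
    then show "\<exists>g. (\<forall>i. i \<notin> set (v # vs) \<longrightarrow> g i = e i) \<and> sat M g \<phi>" using g(2) by blast
  next
    assume "\<exists>g. (\<forall>i. i \<notin> set (v # vs) \<longrightarrow> g i = e i) \<and> sat M g \<phi>"
    then obtain g where g: "\<forall>i. i \<notin> set (v # vs) \<longrightarrow> g i = e i" "sat M g \<phi>" by blast
    then have "\<forall>i. i \<notin> set vs \<longrightarrow> g i = (e(v := g v)) i" by auto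
    then have "sat M (e(v := g v)) (foldr Ex vs \<phi>)" using Cons.IH g(2) by blast
    then show "sat M e (foldr Ex (v # vs) \<phi>)" by auto
  qed
qed (auto simp: fun_eq_iff[symmetric])

lemma fvars_Exs: "fvars (foldr Ex vs \<phi>) = fvars \<phi> - set vs"
  by (induction vs) auto

lemma defin_mono: "C \<subseteq> D \<Longrightarrow> defin M k C \<subseteq> defin M k D"
  unfolding defin_def by blast

lemma definE:
  assumes "S \<in> defin M k C"
  obtains \<phi> e where "\<forall>i\<in>fvars \<phi>. k \<le> i \<longrightarrow> e i \<in> C" "S = {a \<in> tuples k. sat M (env k a e) \<phi>}"
  using assms unfolding defin_def by blast

lemma definI:
  "\<forall>i\<in>fvars \<phi>. k \<le> i \<longrightarrow> e i \<in> C \<Longrightarrow> S = {a \<in> tuples k. sat M (env k a e) \<phi>} \<Longrightarrow> S \<in> defin M k C"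
  unfolding defin_def by blast

lemma defin_rename_parameters:
  assumes params: "\<forall>i\<in>fvars \<phi>. k \<le> i \<longrightarrow> e i \<in> C" and "inj \<pi>"
    and fix_tuple: "\<And>i. i < k \<Longrightarrow> \<pi> i = i" and move: "\<And>i. k \<le> i \<Longrightarrow> k \<le> \<pi> i \<and> e' (\<pi> i) = e i"
  shows "\<forall>i\<in>fvars (rename_fm \<pi> \<phi>). k \<le> i \<longrightarrow> e' i \<in> C"
    and "{a \<in> tuples k. sat M (env k a e') (rename_fm \<pi> \<phi>)} = {a \<in> tuples k. sat M (env k a e) \<phi>}"
proof -
  show "\<forall>i\<in>fvars (rename_fm \<pi> \<phi>). k \<le> i \<longrightarrow> e' i \<in> C"
  proof (intro ballI impI)
    fix i assume "i \<in> fvars (rename_fm \<pi> \<phi>)" "k \<le> i"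
    then obtain j where j: "j \<in> fvars \<phi>" "i = \<pi> j" "k \<le> j"
      using fix_tuple unfolding fvars_rename_fm[OF \<open>inj \<pi>\<close>] by (metis imageE not_le)
    then show "e' i \<in> C" using params move[OF j(3)] by simp
  qed
  have "(env k a e' \<circ> \<pi>) i = env k a e i" for a i
    using fix_tuple[of i] move[of i] by (cases "i < k") (simp_all add: env_def)
  then have "env k a e' \<circ> \<pi> = env k a e" for a
    by (simp add: fun_eq_iff del: comp_apply)
  then show "{a \<in> tuples k. sat M (env k a e') (rename_fm \<pi> \<phi>)} = {a \<in> tuples k. sat M (env k a e) \<phi>}"
    by (simp add: sat_rename_fm[OF \<open>inj \<pi>\<close>])
qed

lemma defin_Int:
  assumes S: "S \<in> defin M k C" and T: "T \<in> defin M k C"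
  shows "S \<inter> T \<in> defin M k C"
proof -
  obtain \<phi>1 e1 where 1: "\<forall>i\<in>fvars \<phi>1. k \<le> i \<longrightarrow> e1 i \<in> C" "S = {a \<in> tuples k. sat M (env k a e1) \<phi>1}"
    using S by (rule definE)
  obtain \<phi>2 e2 where 2: "\<forall>i\<in>fvars \<phi>2. k \<le> i \<longrightarrow> e2 i \<in> C" "T = {a \<in> tuples k. sat M (env k a e2) \<phi>2}"
    using T by (rule definE)
  \<comment> \<open>interleave the parameters of the two formulas\<close>
  define \<pi>1 where "\<pi>1 = (\<lambda>i. if i < k then i else k + 2 * (i - k))"
  define \<pi>2 where "\<pi>2 = (\<lambda>i. if i < k then i else k + 2 * (i - k) + 1)"
  define e where "e = (\<lambda>i. if even (i - k) then e1 (k + (i - k) div 2) else e2 (k + (i - k) div 2))"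
  have "inj \<pi>1" "inj \<pi>2" unfolding \<pi>1_def \<pi>2_def inj_def by auto
  have \<pi>1: "\<And>i. i < k \<Longrightarrow> \<pi>1 i = i" "\<And>i. k \<le> i \<Longrightarrow> k \<le> \<pi>1 i \<and> e (\<pi>1 i) = e1 i"
    and \<pi>2: "\<And>i. i < k \<Longrightarrow> \<pi>2 i = i" "\<And>i. k \<le> i \<Longrightarrow> k \<le> \<pi>2 i \<and> e (\<pi>2 i) = e2 i"
    unfolding \<pi>1_def \<pi>2_def e_def by simp_all
  note rn1 = defin_rename_parameters[OF 1(1) \<open>inj \<pi>1\<close> \<pi>1]
    and rn2 = defin_rename_parameters[OF 2(1) \<open>inj \<pi>2\<close> \<pi>2]
  have "\<forall>i\<in>fvars (Conj (rename_fm \<pi>1 \<phi>1) (rename_fm \<pi>2 \<phi>2)). k \<le> i \<longrightarrow> e i \<in> C"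
    using rn1(1) rn2(1) by auto
  moreover have "S \<inter> T = {a \<in> tuples k. sat M (env k a e) (Conj (rename_fm \<pi>1 \<phi>1) (rename_fm \<pi>2 \<phi>2))}"
    using rn1(2)[of M] rn2(2)[of M] unfolding 1(2) 2(2) by auto
  ultimately show ?thesis by (rule definI)
qed

lemma algebra_defin: "algebra (tuples k) (defin M k C)"
  unfolding algebra_iff_Int
proof (intro conjI ballI)
  show "defin M k C \<subseteq> Pow (tuples k)" unfolding defin_def by auto
  show "{} \<in> defin M k C" by (rule definI[of FF]) auto
  show "tuples k - S \<in> defin M k C" if S: "S \<in> defin M k C" for S
  proof -
    obtain \<phi> e where "\<forall>i\<in>fvars \<phi>. k \<le> i \<longrightarrow> e i \<in> C" "S = {a \<in> tuples k. sat M (env k a e) \<phi>}"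
      using S by (rule definE)
    then show ?thesis by (intro definI[of "Neg \<phi>" k e]) auto
  qed
  show "S \<inter> T \<in> defin M k C" if "S \<in> defin M k C" "T \<in> defin M k C" for S T
    using that by (rule defin_Int)
qed

section \<open>Keisler measures\<close>

definition cylinder :: "nat \<Rightarrow> nat \<Rightarrow> 'u list set \<Rightarrow> 'u list set" where
  "cylinder n m S = {a \<in> tuples (n + m). take n a \<in> S}"

lemma pi_x_cylinder: "pi_x n m \<omega> S = \<omega> (cylinder n m S)"
  unfolding pi_x_def cylinder_def ..

lemma take_image_cylinder:
  assumes "S \<subseteq> tuples n"
  shows "take n ` cylinder n m S = S"
proof
  show "take n ` cylinder n m S \<subseteq> S" unfolding cylinder_def by auto
  show "S \<subseteq> take n ` cylinder n m S"
  proof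
    fix a assume a: "a \<in> S"
    then have "a @ replicate m undefined \<in> cylinder n m S" "take n (a @ replicate m undefined) = a"
      using assms unfolding cylinder_def tuples_def by auto
    then show "a \<in> take n ` cylinder n m S" by (metis image_eqI)
  qed
qed

lemma cylinder_tuples: "cylinder n m (tuples n) = tuples (n + m)"
  unfolding cylinder_def tuples_def by auto

lemma algebra_cylinders:
  assumes "algebra (tuples n) D"
  shows "algebra (tuples (n + m)) (cylinder n m ` D)"
proof -
  interpret D: algebra "tuples n" D by fact
  have "cylinder n m (tuples n - S) = tuples (n + m) - cylinder n m S" for S
    unfolding cylinder_def tuples_def by auto
  moreover have "cylinder n m (S \<inter> T) = cylinder n m S \<inter> cylinder n m T" for S T
    unfolding cylinder_def by auto
  moreover have "cylinder n m {} = {}" "cylinder n m S \<subseteq> tuples (n + m)" for S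
    unfolding cylinder_def by auto
  ultimately show ?thesis
    unfolding algebra_iff_Int by (fastforce intro: image_eqI[of _ _ "{}"] image_eqI[of _ _ "_ - _"]
      image_eqI[of _ _ "_ \<inter> _"])
qed

lemma fa_prob_cylinders:
  assumes D: "algebra (tuples n) D" and \<mu>: "fa_prob D (tuples n) \<mu>"
  shows "fa_prob (cylinder n m ` D) (tuples (n + m)) (\<lambda>T. \<mu> (take n ` T))"
proof -
  interpret D: algebra "tuples n" D by fact
  have take_cyl: "take n ` cylinder n m S = S" if "S \<in> D" for S
    using take_image_cylinder D.sets_into_space[OF that] by blast
  show ?thesis
    unfolding fa_prob_def
  proof (intro conjI ballI impI)
    show "\<mu> (take n ` tuples (n + m)) = 1"
      using take_cyl[OF D.top] \<mu> unfolding cylinder_tuples fa_prob_def by simp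
    show "0 \<le> \<mu> (take n ` c)" if "c \<in> cylinder n m ` D" for c
      using that take_cyl \<mu> unfolding fa_prob_def by auto
    fix c d assume cd: "c \<in> cylinder n m ` D" "d \<in> cylinder n m ` D" "c \<inter> d = {}"
    then obtain S T where ST: "S \<in> D" "T \<in> D" "c = cylinder n m S" "d = cylinder n m T"
      by blast
    have "c \<union> d = cylinder n m (S \<union> T)"
      unfolding ST cylinder_def by auto
    moreover have "S \<inter> T = {}"
      using cd(3) ST take_cyl unfolding cylinder_def by blast
    ultimately show "\<mu> (take n ` (c \<union> d)) = \<mu> (take n ` c) + \<mu> (take n ` d)"
      using ST take_cyl D.Un \<mu> unfolding fa_prob_def by simp
  qed
qed

lemma defin_cylinder:
  assumes "S \<in> defin M n C"
  shows "cylinder n m S \<in> defin M (n + m) C"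
proof -
  obtain \<phi> e where \<phi>: "\<forall>i\<in>fvars \<phi>. n \<le> i \<longrightarrow> e i \<in> C" "S = {a \<in> tuples n. sat M (env n a e) \<phi>}"
    using assms by (rule definE)
  \<comment> \<open>shift the parameters of \<open>\<phi>\<close> past the new variables \<open>n, \<dots>, n + m - 1\<close>\<close>
  define \<pi> where "\<pi> = (\<lambda>i::nat. if i < n then i else i + m)"
  define e' where "e' = (\<lambda>i. e (i - m))"
  have "inj \<pi>" unfolding \<pi>_def inj_def by auto
  have "env (n + m) b e' \<circ> \<pi> = env n (take n b) e" if "length b = n + m" for b
    using that unfolding env_def \<pi>_def e'_def by auto
  then have "cylinder n m S = {b \<in> tuples (n + m). sat M (env (n + m) b e') (rename_fm \<pi> \<phi>)}"
    unfolding cylinder_def \<phi>(2) by (auto simp: sat_rename_fm[OF \<open>inj \<pi>\<close>] tuples_def)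
  moreover have "\<forall>i\<in>fvars (rename_fm \<pi> \<phi>). n + m \<le> i \<longrightarrow> e' i \<in> C"
    using \<phi>(1) unfolding fvars_rename_fm[OF \<open>inj \<pi>\<close>] by (auto simp: \<pi>_def e'_def)
  ultimately show ?thesis by (intro definI)
qed

lemma defin_take_image:
  assumes "p \<in> defin M (n + m) C"
  shows "take n ` p \<in> defin M n C"
proof -
  obtain \<phi> e where \<phi>: "\<forall>i\<in>fvars \<phi>. n + m \<le> i \<longrightarrow> e i \<in> C"
      "p = {b \<in> tuples (n + m). sat M (env (n + m) b e) \<phi>}"
    using assms by (rule definE)
  have "a \<in> take n ` p \<longleftrightarrow> a \<in> tuples n \<and> sat M (env n a e) (foldr Ex [n..<n + m] \<phi>)" for a
  proof
    assume "a \<in> take n ` p"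
    then obtain b where "b \<in> p" "a = take n b" by blast
    moreover have "\<forall>i. i \<notin> set [n..<n + m] \<longrightarrow> env (n + m) b e i = env n (take n b) e i"
      using \<open>b \<in> p\<close> unfolding \<phi>(2) env_def tuples_def by auto
    ultimately show "a \<in> tuples n \<and> sat M (env n a e) (foldr Ex [n..<n + m] \<phi>)"
      using \<phi>(2) by (auto simp: sat_Exs tuples_def)
  next
    assume "a \<in> tuples n \<and> sat M (env n a e) (foldr Ex [n..<n + m] \<phi>)"
    then obtain g where g: "length a = n" "\<forall>i. i \<notin> set [n..<n + m] \<longrightarrow> g i = env n a e i" "sat M g \<phi>"
      by (auto simp: sat_Exs tuples_def)
    \<comment> \<open>the witnesses for the quantified variables extend \<open>a\<close> to a tuple in \<open>p\<close>\<close>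
    define b where "b = a @ map g [n..<n + m]"
    have "env (n + m) b e = g"
      using g(1,2) unfolding env_def b_def by (auto simp: nth_append fun_eq_iff)
    then have "b \<in> p" "take n b = a"
      using g unfolding \<phi>(2) b_def by (simp_all add: tuples_def)
    then show "a \<in> take n ` p" by (metis image_eqI)
  qed
  moreover have "\<forall>i\<in>fvars (foldr Ex [n..<n + m] \<phi>). n \<le> i \<longrightarrow> e i \<in> C"
    using \<phi>(1) by (auto simp: fvars_Exs)
  ultimately show ?thesis by (intro definI[of _ n e]) auto
qed

lemma defin_subset_tuples: "S \<in> defin M k C \<Longrightarrow> S \<subseteq> tuples k"
  unfolding defin_def by auto

lemma agree_mono: "Alg \<subseteq> Alg' \<Longrightarrow> agree Alg' \<mu> \<nu> \<Longrightarrow> agree Alg \<mu> \<nu>"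
  unfolding agree_def by blast

lemma fa_prob_subalgebra: "Alg \<subseteq> Alg' \<Longrightarrow> fa_prob Alg' X \<mu> \<Longrightarrow> fa_prob Alg X \<mu>"
  unfolding fa_prob_def by (auto simp: subset_iff)

lemma keisler_mono: "C \<subseteq> D \<Longrightarrow> keisler M k D \<mu> \<Longrightarrow> keisler M k C \<mu>"
  unfolding keisler_def by (rule fa_prob_subalgebra[OF defin_mono])

lemma keisler_consistent:
  assumes \<kappa>: "keisler M (n + m) A \<kappa>" and marginal: "agree (defin M n A) (pi_x n m \<kappa>) \<mu>"
    and \<mu>: "keisler M n UNIV \<mu>"
    and p: "p \<in> defin M (n + m) A" and S: "S \<in> defin M n UNIV" and "p \<subseteq> cylinder n m S"
  shows "\<kappa> p \<le> \<mu> S"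
proof -
  have q: "take n ` p \<in> defin M n A" by (rule defin_take_image[OF p])
  have "p \<subseteq> cylinder n m (take n ` p)"
    using defin_subset_tuples[OF p]
    unfolding cylinder_def by auto
  then have "\<kappa> p \<le> \<kappa> (cylinder n m (take n ` p))"
    by (rule algebra.fa_prob_mono[OF algebra_defin \<kappa>[unfolded keisler_def] p defin_cylinder[OF q]])
  also have "\<dots> = \<mu> (take n ` p)"
    using marginal q unfolding agree_def pi_x_cylinder by simp
  also have "\<dots> \<le> \<mu> S"
  proof (rule algebra.fa_prob_mono[OF algebra_defin \<mu>[unfolded keisler_def] _ S])
    show "take n ` p \<in> defin M n UNIV"
      using q defin_mono[OF subset_UNIV] by blast
    show "take n ` p \<subseteq> S"
      using \<open>p \<subseteq> cylinder n m S\<close> unfolding cylinder_def by auto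
  qed
  finally show ?thesis .
qed

lemma keisler_amalgamation:
  assumes \<kappa>: "keisler M (n + m) A \<kappa>" and marginal: "agree (defin M n A) (pi_x n m \<kappa>) \<mu>"
    and \<mu>: "keisler M n UNIV \<mu>"
  obtains \<omega> where "keisler M (n + m) UNIV \<omega>" "agree (defin M (n + m) A) \<omega> \<kappa>"
    "agree (defin M n UNIV) (pi_x n m \<omega>) \<mu>"
proof -
  let ?Q = "cylinder n m ` defin M n UNIV" and ?\<mu> = "\<lambda>T. \<mu> (take n ` T)"
  have take_cylinder: "?\<mu> (cylinder n m S) = \<mu> S" if "S \<in> defin M n UNIV" for S
    using take_image_cylinder[OF defin_subset_tuples[OF that]] by simp
  interpret consistent_fa_probs "tuples (n + m)" "defin M (n + m) A" ?Q \<kappa> ?\<mu>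
  proof (intro consistent_fa_probs.intro consistent_fa_probs_axioms.intro)
    show "fa_prob (defin M (n + m) A) (tuples (n + m)) \<kappa>"
      using \<kappa> unfolding keisler_def .
    show "fa_prob ?Q (tuples (n + m)) ?\<mu>"
      using fa_prob_cylinders[OF algebra_defin \<mu>[unfolded keisler_def]] .
    fix p q assume p: "p \<in> defin M (n + m) A" and q: "q \<in> ?Q" and "p \<subseteq> q"
    then obtain S where S: "S \<in> defin M n UNIV" "q = cylinder n m S" by blast
    show "\<kappa> p \<le> ?\<mu> q"
      using keisler_consistent[OF \<kappa> marginal \<mu> p S(1)] \<open>p \<subseteq> q\<close> take_cylinder[OF S(1)]
      unfolding S(2) by simp
  qed (rule algebra_defin algebra_cylinders)+
  have "?Q \<subseteq> defin M (n + m) UNIV"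
    using defin_cylinder by blast
  then obtain \<omega> where \<omega>: "fa_prob (defin M (n + m) UNIV) (tuples (n + m)) \<omega>"
      "agree (defin M (n + m) A) \<omega> \<kappa>" "agree ?Q \<omega> ?\<mu>"
    using amalgamation[OF algebra_defin defin_mono[OF subset_UNIV]] by blast
  have "agree (defin M n UNIV) (pi_x n m \<omega>) \<mu>"
    unfolding agree_def
  proof
    fix S assume S: "S \<in> defin M n UNIV"
    then have "\<omega> (cylinder n m S) = ?\<mu> (cylinder n m S)"
      using \<omega>(3) unfolding agree_def by blast
    then show "pi_x n m \<omega> S = \<mu> S" using take_cylinder[OF S] by (simp add: pi_x_cylinder)
  qed
  with \<omega>(1,2) show ?thesis
    by (rule that[unfolded keisler_def])
qed

lemma geE_from_amalgam:
  assumes "A \<subseteq> B"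
    and determines: "\<And>\<omega>. keisler M (n + m) UNIV \<omega> \<Longrightarrow> agree (defin M (n + m) A) \<omega> \<kappa> \<Longrightarrow>
      agree (defin M n UNIV) (pi_x n m \<omega>) \<mu> \<Longrightarrow> agree (defin M m UNIV) (pi_y n m \<omega>) \<nu>"
    and \<omega>: "keisler M (n + m) UNIV \<omega>" "agree (defin M (n + m) A) \<omega> \<kappa>"
      "agree (defin M n UNIV) (pi_x n m \<omega>) \<mu>"
  shows "geE M n m B \<mu> \<nu>"
  unfolding geE_def
proof (intro exI conjI allI impI)
  show "keisler M (n + m) B \<omega>"
    using keisler_mono[OF subset_UNIV \<omega>(1)] .
  show "agree (defin M n B) (pi_x n m \<omega>) \<mu>"
    using agree_mono[OF defin_mono[OF subset_UNIV] \<omega>(3)] .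
  fix \<omega>' assume \<omega>': "keisler M (n + m) UNIV \<omega>'" "agree (defin M (n + m) B) \<omega>' \<omega>"
    "agree (defin M n UNIV) (pi_x n m \<omega>') \<mu>"
  have "agree (defin M (n + m) A) \<omega>' \<kappa>"
    unfolding agree_def
  proof
    fix S assume "S \<in> defin M (n + m) A"
    moreover have "S \<in> defin M (n + m) B"
      using calculation defin_mono[OF \<open>A \<subseteq> B\<close>] by blast
    ultimately show "\<omega>' S = \<kappa> S"
      using \<omega>'(2) \<omega>(2) unfolding agree_def by simp
  qed
  then show "agree (defin M m UNIV) (pi_y n m \<omega>') \<nu>"
    using determines \<omega>'(1,3) by blast
qed

theorem lemma3p8:
  fixes M :: "('f, 'r, 'u) struct" and K :: "'k set"
    and A B :: "'u set" and n m :: nat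
    and \<mu> \<nu> :: "'u list set \<Rightarrow> real"
  assumes "monster M K"
    and "small K A" and "small K B" and "A \<subseteq> B"
    and "keisler M n UNIV \<mu>" and "keisler M m UNIV \<nu>"
    and "geE M n m A \<mu> \<nu>"
  shows "geE M n m B \<mu> \<nu>"
proof -
  obtain \<kappa> where \<kappa>: "keisler M (n + m) A \<kappa>" "agree (defin M n A) (pi_x n m \<kappa>) \<mu>"
    and determines: "\<And>\<omega>. keisler M (n + m) UNIV \<omega> \<Longrightarrow> agree (defin M (n + m) A) \<omega> \<kappa> \<Longrightarrow>
      agree (defin M n UNIV) (pi_x n m \<omega>) \<mu> \<Longrightarrow> agree (defin M m UNIV) (pi_y n m \<omega>) \<nu>"
    using assms(7) unfolding geE_def by blast
  obtain \<omega> where \<omega>: "keisler M (n + m) UNIV \<omega>" "agree (defin M (n + m) A) \<omega> \<kappa>"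
      "agree (defin M n UNIV) (pi_x n m \<omega>) \<mu>"
    using keisler_amalgamation[OF \<kappa> assms(5)] .
  show ?thesis
    using geE_from_amalgam[OF assms(4) determines \<omega>] .
qed

end
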